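(* Let $f\colon\mathbb{R}\to\mathbb{R}$ be an injective function. Then $\alpha(f)=0$ if and only if $f$ is monotone.
   Context: $\mathrm{Conf}_2(\mathbb{R})=\{(x,y)\in\mathbb{R}^2: x\neq y\}$. $S^0=\{\pm1\}$ with the geodesic (angle) metric $d(u,v)=\arccos(uv)$, so $d(1,-1)=\pi$. For a topological space $X$ and a metric space $Y$, $\delta(g)=\inf\{\delta\ge 0 : \text{for every } x\in X \text{ there is an open neighborhood } U_x \text{ of } x \text{ with } \operatorname{diam}(g(U_x))\le\delta\}$. For injective $f\colon\mathbb{R}\to\mathbb{R}$, $\Phi_f\colon\mathrm{Conf}_2(\mathbb{R})\to S^0$, $\Phi_f(x,y)=\frac{f(x)-f(y)}{|f(x)-f(y)|}$, and $\alpha(f)=\delta(\Phi_f)$. *)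

theory Defs
  imports "HOL-Analysis.Analysis"
begin

definition diam_wrt :: "('b \<Rightarrow> 'b \<Rightarrow> real) \<Rightarrow> 'b set \<Rightarrow> real" where
  "diam_wrt d S = (if S = {} then 0 else (SUP u\<in>S. SUP v\<in>S. d u v))"

definition delta_inv :: "'a topology \<Rightarrow> ('b \<Rightarrow> 'b \<Rightarrow> real) \<Rightarrow> ('a \<Rightarrow> 'b) \<Rightarrow> real" where
  "delta_inv X d g = Inf {\<delta>. \<delta> \<ge> 0 \<and>
     (\<forall>x\<in>topspace X. \<exists>U. openin X U \<and> x \<in> U \<and> diam_wrt d (g ` U) \<le> \<delta>)}"

definition Conf2 :: "(real \<times> real) set" where
  "Conf2 = {(x, y). x \<noteq> y}"

text \<open>Geodesic metric on S^0 = {1,-1}.\<close>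
definition S0_dist :: "real \<Rightarrow> real \<Rightarrow> real" where
  "S0_dist u v = arccos (u * v)"

definition Phi :: "(real \<Rightarrow> real) \<Rightarrow> real \<times> real \<Rightarrow> real" where
  "Phi f p = (f (fst p) - f (snd p)) / \<bar>f (fst p) - f (snd p)\<bar>"

definition alpha :: "(real \<Rightarrow> real) \<Rightarrow> real" where
  "alpha f = delta_inv (subtopology euclidean Conf2) S0_dist (Phi f)"

end

theory Submission
  imports Defs
begin

text \<open>
  Off the diagonal, \<open>Phi f\<close> takes only the values \<open>-1\<close> and \<open>1\<close>, which lie at distance
  \<open>pi\<close> in \<open>S\<^sup>0\<close>. So a neighbourhood on which \<open>Phi f\<close> has diameter below \<open>pi\<close> is one
  on which it is constant, and \<open>alpha f = 0\<close> exactly when \<open>Phi f\<close> is locally constant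
  on \<open>Conf2\<close>. The half-plane \<open>x < y\<close> is connected, so local constancy makes
  \<open>sgn (f x - f y)\<close> the same for all \<open>x < y\<close>, i.e. \<open>f\<close> is monotone. Conversely, for
  injective monotone \<open>f\<close>, \<open>Phi f (x, y)\<close> depends only on the order of \<open>x\<close> and \<open>y\<close>,
  which is locally constant on \<open>Conf2\<close>.
\<close>

lemma diam_wrt_le:
  assumes "0 \<le> r" and "\<And>u v. u \<in> S \<Longrightarrow> v \<in> S \<Longrightarrow> d u v \<le> r"
  shows "diam_wrt d S \<le> r"
  using assms by (auto simp: diam_wrt_def intro!: cSUP_least)

lemma diam_wrt_ge:
  assumes "u \<in> S" "v \<in> S" and bound: "\<And>u v. u \<in> S \<Longrightarrow> v \<in> S \<Longrightarrow> d u v \<le> B"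
  shows "d u v \<le> diam_wrt d S"
proof -
  have row_bdd: "bdd_above (d w ` S)" if "w \<in> S" for w
    using bound that by (intro bdd_aboveI2)
  have "(SUP v\<in>S. d w v) \<le> B" if "w \<in> S" for w
    using bound that \<open>v \<in> S\<close> by (intro cSUP_least) auto
  then have rows_bdd: "bdd_above ((\<lambda>w. SUP v\<in>S. d w v) ` S)"
    by (rule bdd_aboveI2)
  have "d u v \<le> (SUP v\<in>S. d u v)"
    using assms(2) row_bdd[OF assms(1)] by (rule cSUP_upper)
  also have "\<dots> \<le> (SUP w\<in>S. SUP v\<in>S. d w v)"
    using assms(1) rows_bdd by (rule cSUP_upper)
  finally show ?thesis
    using assms(1) by (auto simp: diam_wrt_def)
qed

definition locally_constant_map :: "'a topology \<Rightarrow> ('a \<Rightarrow> 'b) \<Rightarrow> bool" where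
  "locally_constant_map X g \<longleftrightarrow>
     (\<forall>x\<in>topspace X. \<exists>U. openin X U \<and> x \<in> U \<and> (\<forall>y\<in>U. g y = g x))"

lemma locally_constant_mapE:
  assumes "locally_constant_map X g" "x \<in> topspace X"
  obtains U where "openin X U" "x \<in> U" "\<And>y. y \<in> U \<Longrightarrow> g y = g x"
proof -
  from assms have "\<exists>U. openin X U \<and> x \<in> U \<and> (\<forall>y\<in>U. g y = g x)"
    unfolding locally_constant_map_def by (rule bspec)
  with that show thesis
    by blast
qed

lemma delta_inv_eq_0_iff_locally_constant_map:
  fixes c B :: real
  assumes "0 < c"
    and diag: "\<And>u. u \<in> g ` topspace X \<Longrightarrow> d u u = 0"
    and sep: "\<And>u v. u \<in> g ` topspace X \<Longrightarrow> v \<in> g ` topspace X \<Longrightarrow> u \<noteq> v \<Longrightarrow> c \<le> d u v"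
    and bound: "\<And>u v. u \<in> g ` topspace X \<Longrightarrow> v \<in> g ` topspace X \<Longrightarrow> d u v \<le> B"
  shows "delta_inv X d g = 0 \<longleftrightarrow> locally_constant_map X g"
proof -
  define D where "D = {\<delta>. \<delta> \<ge> 0 \<and>
     (\<forall>x\<in>topspace X. \<exists>U. openin X U \<and> x \<in> U \<and> diam_wrt d (g ` U) \<le> \<delta>)}"
  have delta: "delta_inv X d g = Inf D"
    by (simp add: delta_inv_def D_def)
  have image_sub: "g ` U \<subseteq> g ` topspace X" if "openin X U" for U
    using openin_subset[OF that] by blast
  have "diam_wrt d (g ` topspace X) \<le> max B 0"
    using bound by (intro diam_wrt_le) force+
  then have "max B 0 \<in> D"
    by (auto simp: D_def)
  moreover have "bdd_below D"
    by (auto simp: D_def intro: bdd_belowI[where m=0])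
  ultimately have D_properties: "D \<noteq> {}" "bdd_below D"
    by auto
  show ?thesis
  proof
    assume "delta_inv X d g = 0"
    then obtain \<delta> where "\<delta> \<in> D" "\<delta> < c"
      using cInf_less_iff[OF D_properties] \<open>0 < c\<close> delta by auto
    show "locally_constant_map X g"
      unfolding locally_constant_map_def
    proof
      fix x assume "x \<in> topspace X"
      then obtain U where U: "openin X U" "x \<in> U" "diam_wrt d (g ` U) \<le> \<delta>"
        using \<open>\<delta> \<in> D\<close> by (auto simp: D_def)
      have "g y = g x" if "y \<in> U" for y
      proof (rule ccontr)
        assume "g y \<noteq> g x"
        then have "c \<le> d (g y) (g x)"
          using image_sub[OF U(1)] that U(2) by (intro sep) auto
        also have "\<dots> \<le> diam_wrt d (g ` U)"
          using that U(2) image_sub[OF U(1)] by (intro diam_wrt_ge[where B = B] bound) auto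
        finally show False
          using U(3) \<open>\<delta> < c\<close> by simp
      qed
      with U(1,2) show "\<exists>U. openin X U \<and> x \<in> U \<and> (\<forall>y\<in>U. g y = g x)"
        by blast
    qed
  next
    assume locally_constant: "locally_constant_map X g"
    have "0 \<in> D"
      unfolding D_def
    proof (intro CollectI conjI ballI order_refl)
      fix x assume "x \<in> topspace X"
      with locally_constant obtain U where U: "openin X U" "x \<in> U" "\<And>y. y \<in> U \<Longrightarrow> g y = g x"
        by (rule locally_constant_mapE) blast
      have "g ` U = (\<lambda>_. g x) ` U"
        using U(3) by (rule image_cong[OF refl])
      also have "\<dots> = {g x}"
        using U(2) by (rule image_constant)
      finally have "diam_wrt d (g ` U) \<le> 0"
        using diag \<open>x \<in> topspace X\<close> by (intro diam_wrt_le) auto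
      with U(1,2) show "\<exists>U. openin X U \<and> x \<in> U \<and> diam_wrt d (g ` U) \<le> 0"
        by blast
    qed
    then show "delta_inv X d g = 0"
      unfolding delta by (intro cInf_eq_minimum) (auto simp: D_def)
  qed
qed

lemma locally_constant_map_imp_constant_on:
  assumes "locally_constant_map (top_of_set S) g" "connected T" "T \<subseteq> S"
  shows "g constant_on T"
proof (rule locally_constant_imp_constant[OF assms(2)])
  fix a assume "a \<in> T"
  with assms(3) have "a \<in> topspace (top_of_set S)"
    by auto
  with assms(1) obtain U where U: "openin (top_of_set S) U" "a \<in> U" "\<And>y. y \<in> U \<Longrightarrow> g y = g a"
    by (rule locally_constant_mapE) blast
  have "openin (top_of_set T) (U \<inter> T)"
    using openin_subtopology_Int[OF U(1), of T] assms(3)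
    by (simp add: subtopology_subtopology Int_absorb1)
  with U(2,3) \<open>a \<in> T\<close> show "\<exists>V. openin (top_of_set T) V \<and> a \<in> V \<and> (\<forall>x\<in>V. g x = g a)"
    by blast
qed

lemma mono_or_antimono_if_sgn_diff_const:
  fixes f :: "'a::linorder \<Rightarrow> 'b::linordered_idom"
  assumes sgn_const: "\<And>x y x' y'. x < y \<Longrightarrow> x' < y' \<Longrightarrow> sgn (f x - f y) = sgn (f x' - f y')"
  shows "mono f \<or> antimono f"
proof (cases "\<exists>x y. x < y \<and> f y < f x")
  case True
  then obtain x0 y0 where "x0 < y0" "f y0 < f x0"
    by blast
  have "f y < f x" if "x < y" for x y
    using sgn_const[OF that \<open>x0 < y0\<close>] \<open>f y0 < f x0\<close> by (simp add: sgn_1_pos)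
  then have "antimono f"
    by (intro antimonoI) (metis order_le_less order_less_imp_le)
  then show ?thesis ..
next
  case False
  then have "mono f"
    by (intro monoI) (metis not_le order_le_less)
  then show ?thesis ..
qed

lemma sgn_diff_if_mono_inj:
  fixes f :: "'a::linordered_idom \<Rightarrow> 'a"
  assumes "inj f" "mono f"
  shows "sgn (f x - f y) = sgn (x - y)"
proof -
  have strict: "f x < f y" if "x < y" for x y
    using monoD[OF assms(2), of x y] injD[OF assms(1), of x y] that by fastforce
  show ?thesis
    by (cases x y rule: linorder_cases) (use strict[of x y] strict[of y x] in \<open>auto simp: sgn_if\<close>)
qed

lemma sgn_diff_if_antimono_inj:
  fixes f :: "'a::linordered_idom \<Rightarrow> 'a"
  assumes "inj f" "antimono f"
  shows "sgn (f x - f y) = sgn (y - x)"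
proof -
  have strict: "f y < f x" if "x < y" for x y
    using antimonoD[OF assms(2), of x y] injD[OF assms(1), of x y] that by fastforce
  show ?thesis
    by (cases x y rule: linorder_cases) (use strict[of x y] strict[of y x] in \<open>auto simp: sgn_if\<close>)
qed

lemma Phi_eq_sgn: "Phi f p = sgn (f (fst p) - f (snd p))"
  by (simp add: Phi_def real_sgn_eq)

lemma Phi_in_S0:
  assumes "inj f" "p \<in> Conf2"
  shows "Phi f p \<in> {-1, 1}"
proof -
  have "f (fst p) \<noteq> f (snd p)"
    using assms by (auto simp: Conf2_def inj_eq)
  then show ?thesis
    by (auto simp: Phi_eq_sgn sgn_if)
qed

lemma S0_dist_S0:
  assumes "u \<in> {-1, 1}" "v \<in> {-1, 1}"
  shows "S0_dist u v = (if u = v then 0 else pi)"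
  using assms by (auto simp: S0_dist_def)

lemma alpha_eq_0_iff_locally_constant_Phi:
  assumes "inj f"
  shows "alpha f = 0 \<longleftrightarrow> locally_constant_map (top_of_set Conf2) (Phi f)"
  unfolding alpha_def
  by (rule delta_inv_eq_0_iff_locally_constant_map[where c = pi and B = pi])
     (use Phi_in_S0[OF assms] in \<open>auto simp: S0_dist_S0\<close>)

lemma Phi_eq_if_same_order:
  assumes "inj f" "mono f \<or> antimono f" "sgn (fst p - snd p) = sgn (fst q - snd q)"
  shows "Phi f p = Phi f q"
  using assms(2)
proof
  assume "mono f"
  then show ?thesis
    using assms(3) by (simp add: Phi_eq_sgn sgn_diff_if_mono_inj[OF assms(1)])
next
  assume "antimono f"
  then show ?thesis
    using assms(3) by (simp add: Phi_eq_sgn sgn_diff_if_antimono_inj[OF assms(1)])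
       (metis minus_diff_eq sgn_minus)
qed

lemma locally_constant_Phi_if_mono:
  assumes "inj f" "mono f \<or> antimono f"
  shows "locally_constant_map (top_of_set Conf2) (Phi f)"
  unfolding locally_constant_map_def
proof
  fix p assume "p \<in> topspace (top_of_set Conf2)"
  define V where "V = {q. 0 < (fst q - snd q) * (fst p - snd p)}"
  have "open V"
    unfolding V_def by (intro open_Collect_less continuous_intros)
  then have "openin (top_of_set Conf2) (Conf2 \<inter> V)"
    by (rule openin_open_Int)
  moreover have "p \<in> Conf2 \<inter> V"
    using \<open>p \<in> topspace (top_of_set Conf2)\<close> by (auto simp: V_def Conf2_def zero_less_mult_iff linorder_neq_iff)
  moreover have "Phi f q = Phi f p" if "q \<in> Conf2 \<inter> V" for q
    using that assms by (intro Phi_eq_if_same_order) (auto simp: V_def zero_less_mult_iff sgn_if)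
  ultimately show "\<exists>U. openin (top_of_set Conf2) U \<and> p \<in> U \<and> (\<forall>q\<in>U. Phi f q = Phi f p)"
    by blast
qed

lemma locally_constant_Phi_imp_mono:
  assumes "locally_constant_map (top_of_set Conf2) (Phi f)"
  shows "mono f \<or> antimono f"
proof (rule mono_or_antimono_if_sgn_diff_const)
  let ?A = "{p :: real \<times> real. fst p < snd p}"
  have "?A = {p. inner (-1, 1) p > (0::real)}"
    by (auto simp: inner_prod_def)
  then have "connected ?A"
    by (metis convex_halfspace_gt convex_connected)
  moreover have "?A \<subseteq> Conf2"
    by (auto simp: Conf2_def)
  ultimately have "Phi f constant_on ?A"
    using assms by (intro locally_constant_map_imp_constant_on)
  then obtain s where "\<forall>p\<in>?A. Phi f p = s"
    unfolding constant_on_def by blast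
  then show "sgn (f x - f y) = sgn (f x' - f y')" if "x < y" "x' < y'" for x y x' y'
    using that by (simp add: Phi_eq_sgn)
qed

theorem lemma3p9:
  fixes f :: "real \<Rightarrow> real"
  assumes "inj f"
  shows "alpha f = 0 \<longleftrightarrow> (mono f \<or> antimono f)"
  using alpha_eq_0_iff_locally_constant_Phi[OF assms] locally_constant_Phi_if_mono[OF assms]
    locally_constant_Phi_imp_mono by blast

end
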